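(* If $\mathscr{F}=(\Omega,\sqsubseteq,\mathcal{E},\mathcal{A},\mathcal{K},\mathcal{B})$ is an epistemic possibility frame, then $\mathscr{F}^+=((\mathcal{E},\subseteq),\mathbf{A},\mathbf{K},\mathbf{B})$ is an epistemic awareness algebra.
   Context: For a poset $(\Omega,\sqsubseteq)$, let $\downarrow E=\{\omega\mid \omega\sqsubseteq\nu\text{ for some }\nu\in E\}$, $\downarrow\nu=\downarrow\{\nu\}$, $\rho(E)=\{\omega\mid \forall\omega'\sqsubseteq\omega\ \exists\omega''\sqsubseteq\omega'\colon \omega''\in\downarrow E\}$; $\mathcal{RO}(\Omega,\sqsubseteq)=\{E\mid\rho(E)=E\}$, a Boolean algebra under $\subseteq$ with meet $\cap$, join $E\sqcup F=\rho(E\cup F)$, complement $\neg E=\{\omega\mid\forall\omega'\sqsubseteq\omega,\ \omega'\notin E\}$. $\max(E)=\{\omega\in E\mid\text{no }\nu\in E\text{ with }\omega\sqsubseteq\nu,\ \nu\not\sqsubseteq\omega\}$. A possibility frame $(\Omega,\sqsubseteq,\mathcal{E})$ has $\mathcal{E}\subseteq\mathcal{RO}(\Omega,\sqsubseteq)$ nonempty, closed under binary $\cap$ and $\neg$; quasi-principal means: for all $E\in\mathcal{E}$, $\omega\in E$, $\omega\in\downarrow\max(E)$. A possibility frame with awareness $(\Omega,\sqsubseteq,\mathcal{E},\mathcal{A})$: $(\Omega,\sqsubseteq,\mathcal{E})$ quasi-principal with maximum element $m$; $\mathcal{A}:\Omega\to\wp(\Omega)$ with, for all $\omega,\omega',\nu$: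 $m\in\mathcal{A}(\omega)$; $\nu\in\mathcal{A}(\omega)\Rightarrow\downarrow\nu\in\mathcal{E}$; $\omega'\sqsubseteq\omega\Rightarrow\mathcal{A}(\omega)\subseteq\mathcal{A}(\omega')$; $\nu\notin\mathcal{A}(\omega)\Rightarrow\exists\omega'\sqsubseteq\omega\ \forall\omega''\sqsubseteq\omega'\ \nu\notin\mathcal{A}(\omega'')$; if $\nu\in\mathcal{A}(\omega)$, $E,E'\in\mathcal{E}$ and $\max(E\cap\downarrow\nu)\cup\max(E'\cap\downarrow\nu)\subseteq\mathcal{A}(\omega)$ then $\max((E\sqcup E')\cap\downarrow\nu)\subseteq\mathcal{A}(\omega)$; and $\mathcal{E}$ is closed under $\mathbf{A}$, where $\omega\in\mathbf{A}(E)$ iff $\forall\omega'\sqsubseteq\omega\ \forall\nu\in\mathcal{A}(\omega')$: $\max(E\cap\downarrow\nu)\cup\max(\neg E\cap\downarrow\nu)\subseteq\mathcal{A}(\omega')$. An epistemic possibility frame $(\Omega,\sqsubseteq,\mathcal{E},\mathcal{A},\mathcal{K},\mathcal{B})$ adds $\mathcal{K},\mathcal{B}:\Omega\to\wp(\Omega)$ such that for $\mathcal{R}\in\{\mathcal{K},\mathcal{B}\}$: $\omega'\sqsubseteq\omega\Rightarrow\mathcal{R}(\omega')\subseteq\mathcal{R}(\omega)$; $\mathcal{R}(\omega)\in\mathcal{RO}(\Omega,\sqsubseteq)$; $\nu\in\mathcal{R}(\omega)\Rightarrow\exists\omega'\sqsubseteq\omega\ \forall\omega''\sqsubseteq\omega'\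 \exists\nu'\sqsubseteq\nu\colon\nu'\in\mathcal{R}(\omega'')$; $\omega\in\mathcal{K}(\omega)$; $\mathcal{B}(\omega)\neq\varnothing$; $\mathcal{B}(\omega)\subseteq\mathcal{K}(\omega)$; and $\{\omega\mid\mathcal{R}(\omega)\subseteq E\}\in\mathcal{E}$ for $E\in\mathcal{E}$. Define $\mathbf{K}(E)=\{\omega\mid\mathcal{K}(\omega)\subseteq E,\ \omega\in\mathbf{A}(E)\}$, $\mathbf{B}(E)=\{\omega\mid\mathcal{B}(\omega)\subseteq E,\ \omega\in\mathbf{A}(E)\}$. An epistemic awareness algebra is $(\mathbb{B},A,K,B)$, $\mathbb{B}$ a Boolean algebra, $A,K,B$ unary operations such that for all $a,b$ and $\Box\in\{K,B\}$: $A1=1$; $Aa=A\neg a$; $Aa\sqcap Ab\le A(a\sqcap b)$; $K1=1$; $\Box a\sqcap\Box b\le\Box(a\sqcap b)$; if $a\le b$ then $\Box a\sqcap Ab\le\Box b$; $Ka\le a$; $B0=0$; $Ka\le Ba$; $Ba\le Aa$. *)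

theory Defs
  imports Main
begin

(* The set of possibilities Omega is represented by the whole type 'a;
   the refinement order is le (le w v means w \<sqsubseteq> v). *)

definition poset :: "('a \<Rightarrow> 'a \<Rightarrow> bool) \<Rightarrow> bool" where
  "poset le \<longleftrightarrow> (\<forall>x. le x x) \<and> (\<forall>x y z. le x y \<longrightarrow> le y z \<longrightarrow> le x z)
      \<and> (\<forall>x y. le x y \<longrightarrow> le y x \<longrightarrow> x = y)"

definition down :: "('a \<Rightarrow> 'a \<Rightarrow> bool) \<Rightarrow> 'a set \<Rightarrow> 'a set" where
  "down le E = {w. \<exists>v\<in>E. le w v}"

definition rho :: "('a \<Rightarrow> 'a \<Rightarrow> bool) \<Rightarrow> 'a set \<Rightarrow> 'a set" where
  "rho le E = {w. \<forall>w'. le w' w \<longrightarrow> (\<exists>w''. le w'' w' \<and> w'' \<in> down le E)}"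

definition RO :: "('a \<Rightarrow> 'a \<Rightarrow> bool) \<Rightarrow> 'a set set" where
  "RO le = {E. rho le E = E}"

definition rojoin :: "('a \<Rightarrow> 'a \<Rightarrow> bool) \<Rightarrow> 'a set \<Rightarrow> 'a set \<Rightarrow> 'a set" where
  "rojoin le E F = rho le (E \<union> F)"

definition roneg :: "('a \<Rightarrow> 'a \<Rightarrow> bool) \<Rightarrow> 'a set \<Rightarrow> 'a set" where
  "roneg le E = {w. \<forall>w'. le w' w \<longrightarrow> w' \<notin> E}"

definition maxs :: "('a \<Rightarrow> 'a \<Rightarrow> bool) \<Rightarrow> 'a set \<Rightarrow> 'a set" where
  "maxs le E = {w\<in>E. \<not> (\<exists>v\<in>E. le w v \<and> \<not> le v w)}"

definition poss_frame :: "('a \<Rightarrow> 'a \<Rightarrow> bool) \<Rightarrow> 'a set set \<Rightarrow> bool" where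
  "poss_frame le Ev \<longleftrightarrow> poset le \<and> Ev \<subseteq> RO le \<and> Ev \<noteq> {}
      \<and> (\<forall>E\<in>Ev. \<forall>F\<in>Ev. E \<inter> F \<in> Ev) \<and> (\<forall>E\<in>Ev. roneg le E \<in> Ev)"

definition quasi_principal :: "('a \<Rightarrow> 'a \<Rightarrow> bool) \<Rightarrow> 'a set set \<Rightarrow> bool" where
  "quasi_principal le Ev \<longleftrightarrow> (\<forall>E\<in>Ev. \<forall>w\<in>E. w \<in> down le (maxs le E))"

definition aw_op :: "('a \<Rightarrow> 'a \<Rightarrow> bool) \<Rightarrow> ('a \<Rightarrow> 'a set) \<Rightarrow> 'a set \<Rightarrow> 'a set" where
  "aw_op le Aw E = {w. \<forall>w'. le w' w \<longrightarrow> (\<forall>\<nu>\<in>Aw w'.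
       maxs le (E \<inter> down le {\<nu>}) \<union> maxs le (roneg le E \<inter> down le {\<nu>}) \<subseteq> Aw w')}"

definition aw_frame :: "('a \<Rightarrow> 'a \<Rightarrow> bool) \<Rightarrow> 'a set set \<Rightarrow> ('a \<Rightarrow> 'a set) \<Rightarrow> bool" where
  "aw_frame le Ev Aw \<longleftrightarrow> poss_frame le Ev \<and> quasi_principal le Ev \<and>
    (\<exists>m. (\<forall>w. le w m) \<and>
      (\<forall>w. m \<in> Aw w) \<and>
      (\<forall>w \<nu>. \<nu> \<in> Aw w \<longrightarrow> down le {\<nu>} \<in> Ev) \<and>
      (\<forall>w w'. le w' w \<longrightarrow> Aw w \<subseteq> Aw w') \<and>
      (\<forall>w \<nu>. \<nu> \<notin> Aw w \<longrightarrow> (\<exists>w'. le w' w \<and> (\<forall>w''. le w'' w' \<longrightarrow> \<nu> \<notin> Aw w''))) \<and>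
      (\<forall>w \<nu> E E'. \<nu> \<in> Aw w \<longrightarrow> E \<in> Ev \<longrightarrow> E' \<in> Ev \<longrightarrow>
          maxs le (E \<inter> down le {\<nu>}) \<union> maxs le (E' \<inter> down le {\<nu>}) \<subseteq> Aw w \<longrightarrow>
          maxs le (rojoin le E E' \<inter> down le {\<nu>}) \<subseteq> Aw w) \<and>
      (\<forall>E\<in>Ev. aw_op le Aw E \<in> Ev))"

definition rel_ok :: "('a \<Rightarrow> 'a \<Rightarrow> bool) \<Rightarrow> 'a set set \<Rightarrow> ('a \<Rightarrow> 'a set) \<Rightarrow> bool" where
  "rel_ok le Ev R \<longleftrightarrow>
     (\<forall>w w'. le w' w \<longrightarrow> R w' \<subseteq> R w) \<and>
     (\<forall>w. R w \<in> RO le) \<and>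
     (\<forall>w \<nu>. \<nu> \<in> R w \<longrightarrow> (\<exists>w'. le w' w \<and> (\<forall>w''. le w'' w' \<longrightarrow> (\<exists>\<nu>'. le \<nu>' \<nu> \<and> \<nu>' \<in> R w'')))) \<and>
     (\<forall>E\<in>Ev. {w. R w \<subseteq> E} \<in> Ev)"

definition epistemic_frame ::
  "('a \<Rightarrow> 'a \<Rightarrow> bool) \<Rightarrow> 'a set set \<Rightarrow> ('a \<Rightarrow> 'a set) \<Rightarrow> ('a \<Rightarrow> 'a set) \<Rightarrow> ('a \<Rightarrow> 'a set) \<Rightarrow> bool" where
  "epistemic_frame le Ev Aw Kr Br \<longleftrightarrow> aw_frame le Ev Aw \<and> rel_ok le Ev Kr \<and> rel_ok le Ev Br \<and>
     (\<forall>w. w \<in> Kr w) \<and> (\<forall>w. Br w \<noteq> {}) \<and> (\<forall>w. Br w \<subseteq> Kr w)"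

definition modal_op :: "('a \<Rightarrow> 'a \<Rightarrow> bool) \<Rightarrow> ('a \<Rightarrow> 'a set) \<Rightarrow> ('a \<Rightarrow> 'a set) \<Rightarrow> 'a set \<Rightarrow> 'a set" where
  "modal_op le Aw R E = {w. R w \<subseteq> E \<and> w \<in> aw_op le Aw E}"

definition bool_alg ::
  "'b set \<Rightarrow> ('b \<Rightarrow> 'b \<Rightarrow> bool) \<Rightarrow> ('b \<Rightarrow> 'b \<Rightarrow> 'b) \<Rightarrow> ('b \<Rightarrow> 'b \<Rightarrow> 'b) \<Rightarrow> ('b \<Rightarrow> 'b)
    \<Rightarrow> 'b \<Rightarrow> 'b \<Rightarrow> bool" where
  "bool_alg C leq meet join cmp zero one \<longleftrightarrow>
     zero \<in> C \<and> one \<in> C \<and>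
     (\<forall>a\<in>C. \<forall>b\<in>C. meet a b \<in> C \<and> join a b \<in> C) \<and> (\<forall>a\<in>C. cmp a \<in> C) \<and>
     (\<forall>a\<in>C. leq a a) \<and> (\<forall>a\<in>C. \<forall>b\<in>C. \<forall>c\<in>C. leq a b \<longrightarrow> leq b c \<longrightarrow> leq a c) \<and>
     (\<forall>a\<in>C. \<forall>b\<in>C. leq a b \<longrightarrow> leq b a \<longrightarrow> a = b) \<and>
     (\<forall>a\<in>C. \<forall>b\<in>C. \<forall>c\<in>C. leq c (meet a b) \<longleftrightarrow> leq c a \<and> leq c b) \<and>
     (\<forall>a\<in>C. \<forall>b\<in>C. \<forall>c\<in>C. leq (join a b) c \<longleftrightarrow> leq a c \<and> leq b c) \<and>
     (\<forall>a\<in>C. leq zero a \<and> leq a one) \<and>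
     (\<forall>a\<in>C. \<forall>b\<in>C. \<forall>c\<in>C. meet a (join b c) = join (meet a b) (meet a c)) \<and>
     (\<forall>a\<in>C. meet a (cmp a) = zero \<and> join a (cmp a) = one)"

definition ea_algebra ::
  "'b set \<Rightarrow> ('b \<Rightarrow> 'b \<Rightarrow> bool) \<Rightarrow> ('b \<Rightarrow> 'b \<Rightarrow> 'b) \<Rightarrow> ('b \<Rightarrow> 'b \<Rightarrow> 'b) \<Rightarrow> ('b \<Rightarrow> 'b)
    \<Rightarrow> 'b \<Rightarrow> 'b \<Rightarrow> ('b \<Rightarrow> 'b) \<Rightarrow> ('b \<Rightarrow> 'b) \<Rightarrow> ('b \<Rightarrow> 'b) \<Rightarrow> bool" where
  "ea_algebra C leq meet join cmp zero one A K B \<longleftrightarrow>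
     bool_alg C leq meet join cmp zero one \<and>
     (\<forall>a\<in>C. A a \<in> C \<and> K a \<in> C \<and> B a \<in> C) \<and>
     A one = one \<and>
     (\<forall>a\<in>C. A a = A (cmp a)) \<and>
     (\<forall>a\<in>C. \<forall>b\<in>C. leq (meet (A a) (A b)) (A (meet a b))) \<and>
     K one = one \<and>
     (\<forall>Bx\<in>{K, B}. \<forall>a\<in>C. \<forall>b\<in>C. leq (meet (Bx a) (Bx b)) (Bx (meet a b))) \<and>
     (\<forall>Bx\<in>{K, B}. \<forall>a\<in>C. \<forall>b\<in>C. leq a b \<longrightarrow> leq (meet (Bx a) (A b)) (Bx b)) \<and>
     (\<forall>a\<in>C. leq (K a) a) \<and>
     B zero = zero \<and>
     (\<forall>a\<in>C. leq (K a) (B a)) \<and>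
     (\<forall>a\<in>C. leq (B a) (A a))"

end

theory Submission
  imports Defs
begin

(* Regular open sets of a poset are down-closed, and on down-closed sets the regular-open join is
   the De Morgan dual of intersection under the pseudo-complement roneg; this makes the events of
   a possibility frame a Boolean algebra.  Of the awareness axioms only A a \<sqinter> A b \<le> A (a \<sqinter> b)
   needs an idea: by quasi-principality a maximal point x of E \<inter> F \<inter> \<down>\<nu> lies below a maximal
   point y of E \<inter> \<down>\<nu>, and x is then maximal in F \<inter> \<down>y, so awareness of F at y covers it; the
   negation part is the join of the two negations, which the join condition on awareness handles.
   The axioms for K and B hold pointwise because K and B are A-guarded box operators of relations. *)

definition down_closed :: "('a \<Rightarrow> 'a \<Rightarrow> bool) \<Rightarrow> 'a set \<Rightarrow> bool" where
  "down_closed le E \<longleftrightarrow> (\<forall>x y. le x y \<longrightarrow> y \<in> E \<longrightarrow> x \<in> E)"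

lemma poset_refl: "poset le \<Longrightarrow> le x x"
  unfolding poset_def by blast

lemma poset_trans: "poset le \<Longrightarrow> le x y \<Longrightarrow> le y z \<Longrightarrow> le x z"
  unfolding poset_def by blast

lemma poset_antisym: "poset le \<Longrightarrow> le x y \<Longrightarrow> le y x \<Longrightarrow> x = y"
  unfolding poset_def by blast

lemma down_closed_Un: "down_closed le E \<Longrightarrow> down_closed le F \<Longrightarrow> down_closed le (E \<union> F)"
  unfolding down_closed_def by blast

lemma down_closed_Int: "down_closed le E \<Longrightarrow> down_closed le F \<Longrightarrow> down_closed le (E \<inter> F)"
  unfolding down_closed_def by blast

lemma down_eq_self:
  assumes "poset le" "down_closed le E"
  shows "down le E = E"
  using assms(2) poset_refl[OF assms(1)] unfolding down_closed_def down_def by blast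

lemma rho_down_closed:
  "poset le \<Longrightarrow> down_closed le E \<Longrightarrow>
    rho le E = {w. \<forall>w'. le w' w \<longrightarrow> (\<exists>w''. le w'' w' \<and> w'' \<in> E)}"
  unfolding rho_def by (simp add: down_eq_self)

lemma rho_RO: "E \<in> RO le \<Longrightarrow> rho le E = E"
  unfolding RO_def by simp

lemma RO_down_closed:
  assumes "poset le" "E \<in> RO le"
  shows "down_closed le E"
proof -
  have "rho le E = E" using assms(2) by (rule rho_RO)
  moreover have "down_closed le (rho le E)"
    unfolding down_closed_def rho_def using poset_trans[OF assms(1)] by blast
  ultimately show ?thesis by simp
qed

lemma roneg_down_closed:
  assumes "poset le"
  shows "down_closed le (roneg le E)"
  unfolding down_closed_def roneg_def using poset_trans[OF assms] by blast

lemma roneg_roneg: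
  assumes "poset le" "E \<in> RO le"
  shows "roneg le (roneg le E) = E"
proof -
  have "roneg le (roneg le E) = rho le E"
    unfolding rho_down_closed[OF assms(1) RO_down_closed[OF assms]] roneg_def by blast
  with assms(2) show ?thesis by (simp add: rho_RO)
qed

lemma rojoin_eq_roneg_Int:
  assumes "poset le" "down_closed le E" "down_closed le F"
  shows "rojoin le E F = roneg le (roneg le E \<inter> roneg le F)"
  unfolding rojoin_def rho_down_closed[OF assms(1) down_closed_Un[OF assms(2,3)]] roneg_def
  by blast

lemma roneg_Int:
  assumes "poset le" "E \<in> RO le" "F \<in> RO le"
  shows "roneg le (E \<inter> F) = rojoin le (roneg le E) (roneg le F)"
  using rojoin_eq_roneg_Int[OF assms(1) roneg_down_closed roneg_down_closed]
  by (simp add: roneg_roneg assms)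

lemma roneg_UNIV:
  assumes "poset le"
  shows "roneg le UNIV = {}"
  unfolding roneg_def using poset_refl[OF assms] by blast

lemma roneg_empty: "roneg le {} = UNIV"
  unfolding roneg_def by blast

lemma Int_roneg_empty:
  assumes "poset le"
  shows "E \<inter> roneg le E = {}"
  unfolding roneg_def using poset_refl[OF assms] by blast

lemma rojoin_roneg_UNIV:
  assumes "poset le"
  shows "rojoin le E (roneg le E) = UNIV"
  unfolding rojoin_def rho_def down_def roneg_def using poset_refl[OF assms] by blast

lemma rojoin_least:
  assumes "poset le" "G \<in> RO le"
  shows "rojoin le E F \<subseteq> G \<longleftrightarrow> E \<subseteq> G \<and> F \<subseteq> G"
proof
  show "E \<subseteq> G \<and> F \<subseteq> G" if "rojoin le E F \<subseteq> G"
    using that poset_refl[OF assms(1)] unfolding rojoin_def rho_def down_def by blast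
  show "rojoin le E F \<subseteq> G" if "E \<subseteq> G \<and> F \<subseteq> G"
  proof -
    from that have "rojoin le E F \<subseteq> rho le G"
      unfolding rojoin_def rho_def down_def by blast
    with assms(2) show ?thesis by (simp add: rho_RO)
  qed
qed

lemma Int_rojoin_distrib:
  assumes P: "poset le" and E: "E \<in> RO le" and "down_closed le F" "down_closed le G"
  shows "E \<inter> rojoin le F G = rojoin le (E \<inter> F) (E \<inter> G)"
proof
  have dE: "down_closed le E" using P E by (rule RO_down_closed)
  show "E \<inter> rojoin le F G \<subseteq> rojoin le (E \<inter> F) (E \<inter> G)"
  proof
    fix x assume x: "x \<in> E \<inter> rojoin le F G"
    have "\<exists>w''. le w'' w' \<and> w'' \<in> E \<inter> F \<union> E \<inter> G" if "le w' x" for w'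
    proof -
      from x that obtain w'' where "le w'' w'" "w'' \<in> F \<union> G"
        unfolding rojoin_def rho_down_closed[OF P down_closed_Un[OF assms(3,4)]] by blast
      moreover have "w'' \<in> E"
        using dE x \<open>le w'' w'\<close> that poset_trans[OF P] unfolding down_closed_def by blast
      ultimately show ?thesis by blast
    qed
    then show "x \<in> rojoin le (E \<inter> F) (E \<inter> G)"
      unfolding rojoin_def rho_def down_def using poset_refl[OF P] by blast
  qed
  have "rojoin le (E \<inter> F) (E \<inter> G) \<subseteq> rho le E \<inter> rojoin le F G"
    unfolding rojoin_def rho_def down_def by blast
  with E show "rojoin le (E \<inter> F) (E \<inter> G) \<subseteq> E \<inter> rojoin le F G"
    by (simp add: rho_RO)
qed

lemma maxs_down_singleton:
  assumes "poset le"
  shows "maxs le (down le {v}) = {v}"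
  unfolding maxs_def down_def using poset_refl[OF assms] poset_antisym[OF assms] by blast

lemma poss_frameD:
  assumes "poss_frame le Ev"
  shows "poset le" "E \<in> Ev \<Longrightarrow> E \<in> RO le" "E \<in> Ev \<Longrightarrow> F \<in> Ev \<Longrightarrow> E \<inter> F \<in> Ev"
    "E \<in> Ev \<Longrightarrow> roneg le E \<in> Ev"
  using assms unfolding poss_frame_def by auto

lemma poss_frame_bool_alg:
  assumes "poss_frame le Ev"
  shows "bool_alg Ev (\<subseteq>) (\<inter>) (rojoin le) (roneg le) {} UNIV"
proof -
  note fr = poss_frameD[OF assms]
  have dc: "\<And>E. E \<in> Ev \<Longrightarrow> down_closed le E" using fr(1,2) RO_down_closed by blast
  obtain E where "E \<in> Ev" using assms unfolding poss_frame_def by blast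
  then have empty: "{} \<in> Ev" using fr Int_roneg_empty by metis
  have univ: "UNIV \<in> Ev" using fr(4)[OF empty] by (simp add: roneg_empty)
  have join: "\<And>E F. E \<in> Ev \<Longrightarrow> F \<in> Ev \<Longrightarrow> rojoin le E F \<in> Ev"
    using fr dc by (simp add: rojoin_eq_roneg_Int)
  show ?thesis
    unfolding bool_alg_def
    using empty univ join fr dc
    by (simp add: rojoin_least Int_rojoin_distrib Int_roneg_empty rojoin_roneg_UNIV) blast
qed

lemma aw_frameD:
  assumes "aw_frame le Ev Aw"
  shows "poss_frame le Ev" "quasi_principal le Ev"
    "\<nu> \<in> Aw w \<Longrightarrow> down le {\<nu>} \<in> Ev"
    "\<nu> \<in> Aw w \<Longrightarrow> E \<in> Ev \<Longrightarrow> E' \<in> Ev \<Longrightarrow>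
       maxs le (E \<inter> down le {\<nu>}) \<union> maxs le (E' \<inter> down le {\<nu>}) \<subseteq> Aw w \<Longrightarrow>
       maxs le (rojoin le E E' \<inter> down le {\<nu>}) \<subseteq> Aw w"
    "E \<in> Ev \<Longrightarrow> aw_op le Aw E \<in> Ev"
  using assms unfolding aw_frame_def by blast+

lemma aw_op_UNIV:
  assumes "poset le"
  shows "aw_op le Aw UNIV = UNIV"
proof -
  have "maxs le {} = {}" unfolding maxs_def by blast
  then show ?thesis unfolding aw_op_def by (simp add: roneg_UNIV maxs_down_singleton assms)
qed

lemma aw_op_roneg: "poset le \<Longrightarrow> E \<in> RO le \<Longrightarrow> aw_op le Aw (roneg le E) = aw_op le Aw E"
  unfolding aw_op_def by (auto simp: roneg_roneg)

lemma maxs_Int_below_maxs: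
  assumes "poset le" "down_closed le E" "x \<in> maxs le (E \<inter> F \<inter> down le {\<nu>})"
    "y \<in> E \<inter> down le {\<nu>}" "le x y"
  shows "x \<in> maxs le (F \<inter> down le {y})"
proof -
  have "F \<inter> down le {y} \<subseteq> E \<inter> F \<inter> down le {\<nu>}"
    using assms(2,4) unfolding down_closed_def down_def by (blast intro: poset_trans[OF assms(1)])
  moreover have "x \<in> F \<inter> down le {y}"
    using assms(3,5) unfolding maxs_def down_def by blast
  ultimately show ?thesis using assms(3) unfolding maxs_def by blast
qed

lemma maxs_Int_down_subset:
  assumes "poset le" "quasi_principal le Ev" "E \<inter> down le {\<nu>} \<in> Ev" "down_closed le E"
    and E_aware: "maxs le (E \<inter> down le {\<nu>}) \<subseteq> S"
    and F_aware: "\<And>y. y \<in> S \<Longrightarrow> maxs le (F \<inter> down le {y}) \<subseteq> S"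
  shows "maxs le (E \<inter> F \<inter> down le {\<nu>}) \<subseteq> S"
proof
  fix x assume x: "x \<in> maxs le (E \<inter> F \<inter> down le {\<nu>})"
  then have "x \<in> E \<inter> down le {\<nu>}" unfolding maxs_def by blast
  with assms(2,3) have "x \<in> down le (maxs le (E \<inter> down le {\<nu>}))"
    unfolding quasi_principal_def by blast
  then obtain y where y: "y \<in> maxs le (E \<inter> down le {\<nu>})" and "le x y"
    unfolding down_def by blast
  then have "y \<in> E \<inter> down le {\<nu>}" unfolding maxs_def by blast
  then have "x \<in> maxs le (F \<inter> down le {y})"
    using maxs_Int_below_maxs[OF assms(1,4) x] \<open>le x y\<close> by blast
  moreover have "y \<in> S" using y E_aware by blast
  ultimately show "x \<in> S" using F_aware by blast
qed

lemma aw_op_Int: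
  assumes fr: "aw_frame le Ev Aw" and E: "E \<in> Ev" and F: "F \<in> Ev"
  shows "aw_op le Aw E \<inter> aw_op le Aw F \<subseteq> aw_op le Aw (E \<inter> F)"
proof -
  note pf = poss_frameD[OF aw_frameD(1)[OF fr]]
  have "maxs le (E \<inter> F \<inter> down le {\<nu>}) \<union> maxs le (roneg le (E \<inter> F) \<inter> down le {\<nu>}) \<subseteq> Aw w'"
    if E_aware: "\<forall>\<nu>\<in>Aw w'. maxs le (E \<inter> down le {\<nu>}) \<union> maxs le (roneg le E \<inter> down le {\<nu>}) \<subseteq> Aw w'"
      and F_aware: "\<forall>\<nu>\<in>Aw w'. maxs le (F \<inter> down le {\<nu>}) \<union> maxs le (roneg le F \<inter> down le {\<nu>}) \<subseteq> Aw w'"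
      and \<nu>: "\<nu> \<in> Aw w'" for w' \<nu>
  proof -
    have "E \<inter> down le {\<nu>} \<in> Ev" using pf(3)[OF E aw_frameD(3)[OF fr \<nu>]] .
    then have "maxs le (E \<inter> F \<inter> down le {\<nu>}) \<subseteq> Aw w'"
      by (rule maxs_Int_down_subset[OF pf(1) aw_frameD(2)[OF fr] _ RO_down_closed[OF pf(1) pf(2)[OF E]]])
        (use E_aware F_aware \<nu> in blast)+
    moreover have "maxs le (rojoin le (roneg le E) (roneg le F) \<inter> down le {\<nu>}) \<subseteq> Aw w'"
      by (rule aw_frameD(4)[OF fr \<nu> pf(4)[OF E] pf(4)[OF F]]) (use E_aware F_aware \<nu> in blast)
    ultimately show ?thesis by (simp add: roneg_Int pf(1,2) E F)
  qed
  then show ?thesis unfolding aw_op_def by blast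
qed

lemma modal_op_closed:
  assumes fr: "aw_frame le Ev Aw" and "rel_ok le Ev R" and E: "E \<in> Ev"
  shows "modal_op le Aw R E \<in> Ev"
proof -
  have "modal_op le Aw R E = {w. R w \<subseteq> E} \<inter> aw_op le Aw E"
    unfolding modal_op_def by blast
  moreover have "{w. R w \<subseteq> E} \<in> Ev" using assms(2) E unfolding rel_ok_def by blast
  ultimately show ?thesis
    using poss_frameD(3)[OF aw_frameD(1)[OF fr]] aw_frameD(5)[OF fr E] by simp
qed

lemma modal_op_Int:
  assumes "aw_frame le Ev Aw" "E \<in> Ev" "F \<in> Ev"
  shows "modal_op le Aw R E \<inter> modal_op le Aw R F \<subseteq> modal_op le Aw R (E \<inter> F)"
  using aw_op_Int[OF assms] unfolding modal_op_def by blast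

lemma modal_op_mono: "E \<subseteq> F \<Longrightarrow> modal_op le Aw R E \<inter> aw_op le Aw F \<subseteq> modal_op le Aw R F"
  unfolding modal_op_def by blast

theorem proposition4p3:
  fixes le :: "'a \<Rightarrow> 'a \<Rightarrow> bool"
    and Ev :: "'a set set"
    and Aw Kr Br :: "'a \<Rightarrow> 'a set"
  assumes "epistemic_frame le Ev Aw Kr Br"
  shows "ea_algebra Ev (\<subseteq>) (\<inter>) (rojoin le) (roneg le) {} UNIV
           (aw_op le Aw) (modal_op le Aw Kr) (modal_op le Aw Br)"
proof -
  have fr: "aw_frame le Ev Aw" and K_rel: "rel_ok le Ev Kr" and B_rel: "rel_ok le Ev Br"
    and refl: "\<And>w. w \<in> Kr w" and serial: "\<And>w. Br w \<noteq> {}" and BK: "\<And>w. Br w \<subseteq> Kr w"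
    using assms unfolding epistemic_frame_def by auto
  note pf = aw_frameD(1)[OF fr]
  have P: "poset le" by (rule poss_frameD(1)[OF pf])
  let ?A = "aw_op le Aw" and ?K = "modal_op le Aw Kr" and ?B = "modal_op le Aw Br"
  have closed: "\<forall>a\<in>Ev. ?A a \<in> Ev \<and> ?K a \<in> Ev \<and> ?B a \<in> Ev"
    using aw_frameD(5)[OF fr] modal_op_closed[OF fr K_rel] modal_op_closed[OF fr B_rel] by blast
  have A_laws: "\<forall>a\<in>Ev. ?A a = ?A (roneg le a)" "\<forall>a\<in>Ev. \<forall>b\<in>Ev. ?A a \<inter> ?A b \<subseteq> ?A (a \<inter> b)"
    using aw_op_roneg[OF P poss_frameD(2)[OF pf]] aw_op_Int[OF fr] by auto
  have box_laws: "\<forall>Bx\<in>{?K, ?B}. \<forall>a\<in>Ev. \<forall>b\<in>Ev. Bx a \<inter> Bx b \<subseteq> Bx (a \<inter> b)"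
    "\<forall>Bx\<in>{?K, ?B}. \<forall>a\<in>Ev. \<forall>b\<in>Ev. a \<subseteq> b \<longrightarrow> Bx a \<inter> ?A b \<subseteq> Bx b"
    using modal_op_Int[OF fr] modal_op_mono by blast+
  have K_B_units: "?K UNIV = UNIV" "?B {} = {}"
    unfolding modal_op_def using serial by (auto simp: aw_op_UNIV[OF P])
  have K_B_bounds: "\<forall>a\<in>Ev. ?K a \<subseteq> a" "\<forall>a\<in>Ev. ?K a \<subseteq> ?B a" "\<forall>a\<in>Ev. ?B a \<subseteq> ?A a"
    using refl BK unfolding modal_op_def by blast+
  show ?thesis
    unfolding ea_algebra_def
    by (intro conjI poss_frame_bool_alg[OF pf] aw_op_UNIV[OF P]) fact+
qed

end
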